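(* The magmatic $\mathbb K$-algebra $\mathrm{Mag}$ has a $\Bbbk$-basis consisting of the trivial monomials $1_n$ ($n\in\mathbb N$) and the monomials $\partial^m_{i_m}\cdots\partial^n_{i_n}$ with $m\ge n\ge0$, $i_m\ge\cdots\ge i_n$, and $0\le i_j\le j$ for all $j=n,\dots,m$.
   Context: Let $\Bbbk$ be a field and $\mathbb{K}=\bigoplus_{n\in\mathbb N}\Bbbk1_n$ with $1_n1_m=\delta_{nm}1_n$. A $\mathbb K$-algebra is the categorical algebra of a small $\Bbbk$-linear category with object set $\mathbb N$. $T(\partial)$ is the free $\mathbb K$-algebra on generators $\partial^n_j$ ($n\ge0$, $0\le j\le n$), where $\partial^n_j$ is a morphism $n\to n+1$ (so $1_{n+1}\partial^n_j=\partial^n_j1_n=\partial^n_j$, and products of generators with mismatched degrees are $0$; nonzero monomials have the form $\partial^m_{i_m}\partial^{m-1}_{i_{m-1}}\cdots\partial^n_{i_n}$). $\mathrm{Mag}=T(\partial)/I_{\mathrm{Mag}}$ with $I_{\mathrm{Mag}}$ the two-sided ideal generated by $\partial^{n+1}_i\partial^n_j-\partial^{n+1}_{j+1}\partial^n_i$ for $0\le i<j\le n$, $n\ge0$. *)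

theory Defs
  imports Main
begin

text \<open>Monomials of T(partial): a pair (n, w) with w = [i_n, i_(n+1), ..., i_m]
  (listed bottom-up) stands for the word partial^m_(i_m) ... partial^n_(i_n) : n -> m+1;
  (n, []) stands for the trivial monomial 1_n.\<close>

type_synonym mon = "nat \<times> nat list"

definition valid_mon :: "mon \<Rightarrow> bool" where
  "valid_mon x \<longleftrightarrow> (\<forall>j < length (snd x). snd x ! j \<le> fst x + j)"

text \<open>Elements of T(partial): finitely supported k-valued functions on valid monomials
  (i.e. finite k-linear combinations of monomials).\<close>

definition Tpd :: "(mon \<Rightarrow> 'k::field) set" where
  "Tpd = {f. finite {x. f x \<noteq> 0} \<and> (\<forall>x. f x \<noteq> 0 \<longrightarrow> valid_mon x)}"

text \<open>Multiplication in T(partial) (composition of paths; mismatched degrees give 0):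
  (f * g)(n, w) = sum over splittings w = u @ v of g(n,u) * f(n + length u, v).\<close>

definition tmult :: "(mon \<Rightarrow> 'k::field) \<Rightarrow> (mon \<Rightarrow> 'k) \<Rightarrow> (mon \<Rightarrow> 'k)" where
  "tmult f g = (\<lambda>(n, w). \<Sum>k\<le>length w. g (n, take k w) * f (n + k, drop k w))"

definition mono :: "mon \<Rightarrow> (mon \<Rightarrow> 'k::field)" where
  "mono x = (\<lambda>y. if y = x then 1 else 0)"

text \<open>Generator partial^(n+1)_i partial^n_j - partial^(n+1)_(j+1) partial^n_i.\<close>

definition mag_rel :: "nat \<Rightarrow> nat \<Rightarrow> nat \<Rightarrow> (mon \<Rightarrow> 'k::field)" where
  "mag_rel n i j = (\<lambda>y. mono (n, [j, i]) y - mono (n, [i, Suc j]) y)"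

definition ideal_gen :: "(mon \<Rightarrow> 'k::field) set \<Rightarrow> (mon \<Rightarrow> 'k) set" where
  "ideal_gen G = \<Inter>{J. J \<subseteq> Tpd \<and> G \<subseteq> J \<and> (\<lambda>_. 0) \<in> J
      \<and> (\<forall>f\<in>J. \<forall>g\<in>J. (\<lambda>x. f x + g x) \<in> J)
      \<and> (\<forall>c. \<forall>f\<in>J. (\<lambda>x. c * f x) \<in> J)
      \<and> (\<forall>f\<in>J. \<forall>g\<in>Tpd. tmult f g \<in> J \<and> tmult g f \<in> J)}"

definition I_Mag :: "(mon \<Rightarrow> 'k::field) set" where
  "I_Mag = ideal_gen {mag_rel n i j | n i j. i < j \<and> j \<le> n}"

text \<open>The claimed basis monomials: 1_n, and partial^m_(i_m)...partial^n_(i_n) with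
  i_m >= ... >= i_n, i.e. the bottom-up list is sorted (non-decreasing).\<close>

definition Bmon :: "mon set" where
  "Bmon = {x. valid_mon x \<and> sorted (snd x)}"

end

theory Submission
  imports Defs
begin

text \<open>
  Read bottom-up, the relation \<open>\<partial>^(n+1)_i \<partial>^n_j = \<partial>^(n+1)_(j+1) \<partial>^n_i\<close> (\<open>i < j\<close>)
  rewrites the index word \<open>[j, i]\<close> to \<open>[i, j + 1]\<close>. Inserting a letter into a sorted
  word by moving it upwards past smaller letters, incrementing it at each step, gives every word
  a sorted normal form that is reached by such rewrites and is compatible with concatenation:
  the normal form of \<open>u @ v\<close> depends only on those of \<open>u\<close> and \<open>v\<close>. So \<open>f - reduce f\<close> lies
  in the ideal, where \<open>reduce\<close> is the linear map sending every monomial to its normal form;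
  conversely \<open>reduce\<close> kills the relations and, by compatibility, the whole ideal, while it
  fixes every combination of sorted monomials.
\<close>

subsection \<open>Index words and their normal form\<close>

fun valid_word :: "nat \<Rightarrow> nat list \<Rightarrow> bool" where
  "valid_word n [] = True"
| "valid_word n (a # w) = (a \<le> n \<and> valid_word (Suc n) w)"

lemma valid_mon_iff_valid_word: "valid_mon (n, w) \<longleftrightarrow> valid_word n w"
proof (induction w arbitrary: n)
  case Nil
  show ?case by (simp add: valid_mon_def)
next
  case (Cons a w)
  have "valid_mon (n, a # w) \<longleftrightarrow> a \<le> n \<and> (\<forall>j<length w. w ! j \<le> Suc n + j)"
    unfolding valid_mon_def by (auto simp: less_Suc_eq_0_disj)
  then show ?case using Cons.IH[of "Suc n"] by (simp add: valid_mon_def)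
qed

lemma valid_word_append: "valid_word n (u @ v) \<longleftrightarrow> valid_word n u \<and> valid_word (n + length u) v"
  by (induction u arbitrary: n) auto

lemma valid_word_bounded: "valid_word n w \<Longrightarrow> set w \<subseteq> {..n + length w}"
  by (induction w arbitrary: n) fastforce+

fun shift_insert :: "nat \<Rightarrow> nat list \<Rightarrow> nat list" where
  "shift_insert a [] = [a]"
| "shift_insert a (b # s) = (if a \<le> b then a # b # s else b # shift_insert (Suc a) s)"

fun normal_word :: "nat list \<Rightarrow> nat list" where
  "normal_word [] = []"
| "normal_word (a # w) = shift_insert a (normal_word w)"

lemma length_shift_insert [simp]: "length (shift_insert a s) = Suc (length s)"
  by (induction a s rule: shift_insert.induct) auto

lemma length_normal_word [simp]: "length (normal_word w) = length w"
  by (induction w) auto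

lemma set_shift_insert: "x \<in> set (shift_insert a s) \<Longrightarrow> x \<in> set s \<or> a \<le> x"
  by (induction a s rule: shift_insert.induct) (auto split: if_splits)

lemma sorted_shift_insert: "sorted s \<Longrightarrow> sorted (shift_insert a s)"
proof (induction a s rule: shift_insert.induct)
  case (2 a b s)
  show ?case
  proof (cases "a \<le> b")
    case False
    have "sorted (shift_insert (Suc a) s)" using 2 False by simp
    moreover have "\<forall>x\<in>set (shift_insert (Suc a) s). b \<le> x"
      using set_shift_insert[of _ "Suc a" s] 2(2) False by fastforce
    ultimately show ?thesis using False by simp
  qed (use 2 in auto)
qed simp

lemma sorted_normal_word: "sorted (normal_word w)"
  by (induction w) (auto simp: sorted_shift_insert)

lemma normal_word_sorted: "sorted w \<Longrightarrow> normal_word w = w"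
proof (induction w)
  case (Cons a w)
  then show ?case by (cases w) auto
qed simp

lemma valid_word_shift_insert:
  "a \<le> n \<Longrightarrow> valid_word (Suc n) s \<Longrightarrow> valid_word n (shift_insert a s)"
  by (induction s arbitrary: a n) auto

lemma valid_word_normal_word: "valid_word n w \<Longrightarrow> valid_word n (normal_word w)"
  by (induction w arbitrary: n) (auto simp: valid_word_shift_insert)

lemma shift_insert_commute:
  "b < a \<Longrightarrow> shift_insert a (shift_insert b s) = shift_insert b (shift_insert (Suc a) s)"
proof (induction s arbitrary: a b)
  case (Cons c t)
  then show ?case
    by (cases "b \<le> c") (auto simp: Cons.IH[of "Suc b" "Suc a"])
qed simp

lemma normal_word_Cons_append:
  "normal_word (a # s @ v) = normal_word (shift_insert a s @ v)"
proof (induction s arbitrary: a)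
  case (Cons b t)
  show ?case
  proof (cases "a \<le> b")
    case False
    have "normal_word (a # (b # t) @ v) = shift_insert b (shift_insert (Suc a) (normal_word (t @ v)))"
      using False by (simp add: shift_insert_commute)
    also have "\<dots> = shift_insert b (normal_word (shift_insert (Suc a) t @ v))"
      using Cons.IH by simp
    finally show ?thesis using False by simp
  qed simp
qed simp

lemma normal_word_append_normal_left: "normal_word (u @ v) = normal_word (normal_word u @ v)"
proof (induction u)
  case (Cons a u)
  have "normal_word ((a # u) @ v) = normal_word (a # normal_word u @ v)"
    using Cons.IH by simp
  also have "\<dots> = normal_word (shift_insert a (normal_word u) @ v)"
    by (rule normal_word_Cons_append)
  finally show ?case by simp
qed simp

lemma normal_word_append_normal_right: "normal_word (u @ v) = normal_word (u @ normal_word v)"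
  by (induction u) (auto simp: normal_word_sorted sorted_normal_word)

definition valid_words :: "nat \<Rightarrow> nat \<Rightarrow> nat list set" where
  "valid_words n L = {w. length w = L \<and> valid_word n w}"

lemma finite_valid_words: "finite (valid_words n L)"
proof (rule finite_subset)
  show "valid_words n L \<subseteq> {xs. set xs \<subseteq> {..n + L} \<and> length xs = L}"
    using valid_word_bounded by (auto simp: valid_words_def)
qed (rule finite_lists_length_eq, simp)

lemma valid_words_append_bij:
  assumes "k \<le> L"
  shows "bij_betw (\<lambda>(u, v). u @ v) (valid_words n k \<times> valid_words (n + k) (L - k)) (valid_words n L)"
proof (rule bij_betwI')
  fix x y assume "x \<in> valid_words n k \<times> valid_words (n + k) (L - k)"
    and "y \<in> valid_words n k \<times> valid_words (n + k) (L - k)"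
  moreover obtain u v u' v' where xy: "x = (u, v)" "y = (u', v')" by (cases x, cases y)
  ultimately have "length u = length u'" by (simp add: valid_words_def)
  then show "((case x of (u, v) \<Rightarrow> u @ v) = (case y of (u, v) \<Rightarrow> u @ v)) = (x = y)"
    unfolding xy by simp
next
  fix x assume "x \<in> valid_words n k \<times> valid_words (n + k) (L - k)"
  then show "(case x of (u, v) \<Rightarrow> u @ v) \<in> valid_words n L"
    using assms by (auto simp: valid_words_def valid_word_append)
next
  fix w assume "w \<in> valid_words n L"
  then have "(take k w, drop k w) \<in> valid_words n k \<times> valid_words (n + k) (L - k)"
    using assms valid_word_append[of n "take k w" "drop k w"]
    by (simp add: valid_words_def min_def split: if_splits)
  then show "\<exists>x\<in>valid_words n k \<times> valid_words (n + k) (L - k). w = (case x of (u, v) \<Rightarrow> u @ v)"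
    by (rule bexI[rotated]) simp
qed

lemma tmult_apply:
  "tmult f g (n, w) = (\<Sum>k\<le>length w. g (n, take k w) * f (n + k, drop k w))"
  by (simp add: tmult_def)

lemma tmult_mono_mono:
  "tmult (mono (m, v)) (mono (n, u)) = (if m = n + length u then mono (n, u @ v) else (\<lambda>_. 0))"
proof (rule ext)
  fix x :: mon
  obtain n' w where x: "x = (n', w)" by (cases x)
  have split_iff: "length u \<le> length w \<and> take (length u) w = u \<and> drop (length u) w = v \<longleftrightarrow> w = u @ v"
    by (metis append_eq_conv_conj append_take_drop_id le_add1 length_append)
  have "tmult (mono (m, v)) (mono (n, u)) (n', w) =
     (\<Sum>k\<le>length w. if k = length u then (if length u \<le> length w \<and> n' = n \<and> take k w = u
        \<and> m = n + k \<and> drop k w = v then 1 else 0) else 0)"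
    unfolding tmult_apply by (rule sum.cong[OF refl]) (auto simp: mono_def)
  also have "\<dots> = (if m = n + length u then mono (n, u @ v) else (\<lambda>_. 0)) (n', w)"
    using split_iff by (auto simp: mono_def)
  finally show "tmult (mono (m, v)) (mono (n, u)) x = (if m = n + length u then mono (n, u @ v) else (\<lambda>_. 0)) x"
    by (simp add: x)
qed

lemma tmult_diff_left: "tmult (\<lambda>x. f x - g x) h = (\<lambda>x. tmult f h x - tmult g h x)"
  by (simp add: tmult_def fun_eq_iff sum_subtractf algebra_simps split: prod.split)

lemma tmult_diff_right: "tmult f (\<lambda>x. g x - h x) = (\<lambda>x. tmult f g x - tmult f h x)"
  by (simp add: tmult_def fun_eq_iff sum_subtractf algebra_simps split: prod.split)

lemma TpdI:
  "finite {x. f x \<noteq> 0} \<Longrightarrow> (\<And>n w. f (n, w) \<noteq> 0 \<Longrightarrow> valid_word n w) \<Longrightarrow> f \<in> Tpd"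
  by (auto simp: Tpd_def valid_mon_iff_valid_word[symmetric])

lemma TpdD: "f \<in> Tpd \<Longrightarrow> f (n, w) \<noteq> 0 \<Longrightarrow> valid_word n w"
  by (auto simp: Tpd_def valid_mon_iff_valid_word[symmetric])

lemma Tpd_finite_support: "f \<in> Tpd \<Longrightarrow> finite {x. f x \<noteq> 0}"
  by (simp add: Tpd_def)

lemma Tpd_mono: "valid_word n w \<Longrightarrow> mono (n, w) \<in> Tpd"
  by (rule TpdI) (auto simp: mono_def split: if_splits)

lemma Tpd_zero: "(\<lambda>_. 0) \<in> Tpd"
  by (rule TpdI) auto

lemma Tpd_add: "f \<in> Tpd \<Longrightarrow> g \<in> Tpd \<Longrightarrow> (\<lambda>x. f x + g x) \<in> Tpd"
proof (rule TpdI)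
  assume f: "f \<in> Tpd" and g: "g \<in> Tpd"
  show "finite {x. f x + g x \<noteq> 0}"
    by (rule finite_subset[of _ "{x. f x \<noteq> 0} \<union> {x. g x \<noteq> 0}"])
      (use Tpd_finite_support[OF f] Tpd_finite_support[OF g] in auto)
  fix n w assume "f (n, w) + g (n, w) \<noteq> 0"
  then show "valid_word n w" using TpdD[OF f] TpdD[OF g] by force
qed

lemma Tpd_smult: "f \<in> Tpd \<Longrightarrow> (\<lambda>x. c * f x) \<in> Tpd"
proof (rule TpdI)
  assume f: "f \<in> Tpd"
  show "finite {x. c * f x \<noteq> 0}"
    by (rule finite_subset[of _ "{x. f x \<noteq> 0}"]) (use Tpd_finite_support[OF f] in auto)
  fix n w assume "c * f (n, w) \<noteq> 0"
  then show "valid_word n w" using TpdD[OF f] by force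
qed

lemma tmult_nonzero_split:
  assumes "tmult f g (n, w) \<noteq> 0"
  obtains k where "k \<le> length w" "g (n, take k w) \<noteq> 0" "f (n + k, drop k w) \<noteq> 0"
proof -
  from assms obtain k where "k \<in> {..length w}" "g (n, take k w) * f (n + k, drop k w) \<noteq> 0"
    unfolding tmult_apply by (rule sum.not_neutral_contains_not_neutral)
  then show thesis using that by auto
qed

lemma Tpd_tmult: "f \<in> Tpd \<Longrightarrow> g \<in> Tpd \<Longrightarrow> tmult f g \<in> Tpd"
proof (rule TpdI)
  assume f: "f \<in> Tpd" and g: "g \<in> Tpd"
  let ?concat = "\<lambda>(a, b). (fst a, snd a @ snd b)"
  show "finite {x. tmult f g x \<noteq> 0}"
  proof (rule finite_subset)
    show "{x. tmult f g x \<noteq> 0} \<subseteq> ?concat ` ({x. g x \<noteq> 0} \<times> {x. f x \<noteq> 0})"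
    proof (clarify)
      fix n w assume "tmult f g (n, w) \<noteq> 0"
      then obtain k where "g (n, take k w) \<noteq> 0" "f (n + k, drop k w) \<noteq> 0"
        by (rule tmult_nonzero_split)
      then show "(n, w) \<in> ?concat ` ({x. g x \<noteq> 0} \<times> {x. f x \<noteq> 0})"
        by (auto intro!: image_eqI[of _ _ "((n, take k w), (n + k, drop k w))"])
    qed
    show "finite (?concat ` ({x. g x \<noteq> 0} \<times> {x. f x \<noteq> 0}))"
      using Tpd_finite_support[OF f] Tpd_finite_support[OF g] by auto
  qed
  fix n w assume "tmult f g (n, w) \<noteq> 0"
  then obtain k where k: "k \<le> length w" "g (n, take k w) \<noteq> 0" "f (n + k, drop k w) \<noteq> 0"
    by (rule tmult_nonzero_split)
  have "valid_word n (take k w @ drop k w)"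
    unfolding valid_word_append using TpdD[OF f k(3)] TpdD[OF g k(2)] k(1) by simp
  then show "valid_word n w" by simp
qed

lemma Tpd_mag_rel: "i < j \<Longrightarrow> j \<le> n \<Longrightarrow> mag_rel n i j \<in> Tpd"
proof (rule TpdI)
  show "finite {x. mag_rel n i j x \<noteq> 0}"
    by (rule finite_subset[of _ "{(n, [j, i]), (n, [i, Suc j])}"]) (auto simp: mag_rel_def mono_def)
  fix m w assume "i < j" "j \<le> n" "mag_rel n i j (m, w) \<noteq> 0"
  then show "valid_word m w" by (auto simp: mag_rel_def mono_def split: if_splits)
qed

lemma ideal_gen_least:
  assumes "J \<subseteq> Tpd" "G \<subseteq> J" "(\<lambda>_. 0) \<in> J"
    and "\<And>f g. f \<in> J \<Longrightarrow> g \<in> J \<Longrightarrow> (\<lambda>x. f x + g x) \<in> J"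
    and "\<And>c f. f \<in> J \<Longrightarrow> (\<lambda>x. c * f x) \<in> J"
    and "\<And>f g. f \<in> J \<Longrightarrow> g \<in> Tpd \<Longrightarrow> tmult f g \<in> J \<and> tmult g f \<in> J"
  shows "ideal_gen G \<subseteq> J"
  unfolding ideal_gen_def using assms by (intro Inter_lower) blast

lemma ideal_gen_zero: "(\<lambda>_. 0) \<in> ideal_gen G"
  unfolding ideal_gen_def by blast

lemma ideal_gen_generator: "r \<in> G \<Longrightarrow> r \<in> ideal_gen G"
  unfolding ideal_gen_def by blast

lemma ideal_gen_add: "f \<in> ideal_gen G \<Longrightarrow> g \<in> ideal_gen G \<Longrightarrow> (\<lambda>x. f x + g x) \<in> ideal_gen G"
  unfolding ideal_gen_def by blast

lemma ideal_gen_smult: "f \<in> ideal_gen G \<Longrightarrow> (\<lambda>x. c * f x) \<in> ideal_gen G"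
  unfolding ideal_gen_def by blast

lemma ideal_gen_tmult_left: "f \<in> ideal_gen G \<Longrightarrow> g \<in> Tpd \<Longrightarrow> tmult f g \<in> ideal_gen G"
  unfolding ideal_gen_def by blast

lemma ideal_gen_tmult_right: "f \<in> ideal_gen G \<Longrightarrow> g \<in> Tpd \<Longrightarrow> tmult g f \<in> ideal_gen G"
  unfolding ideal_gen_def by blast

lemma ideal_gen_sum:
  "finite S \<Longrightarrow> (\<And>z. z \<in> S \<Longrightarrow> F z \<in> ideal_gen G) \<Longrightarrow> (\<lambda>y. \<Sum>z\<in>S. F z y) \<in> ideal_gen G"
proof (induction S rule: finite_induct)
  case empty
  then show ?case using ideal_gen_zero by simp
next
  case (insert a S)
  then have "(\<lambda>y. F a y + (\<Sum>z\<in>S. F z y)) \<in> ideal_gen G"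
    by (intro ideal_gen_add) auto
  then show ?case using insert by simp
qed

lemma ideal_gen_diff_trans:
  "(\<lambda>x. a x - b x) \<in> ideal_gen G \<Longrightarrow> (\<lambda>x. b x - c x) \<in> ideal_gen G
    \<Longrightarrow> (\<lambda>x. a x - (c x :: 'k::field)) \<in> ideal_gen G"
  using ideal_gen_add[of "\<lambda>x. a x - b x" G "\<lambda>x. b x - c x"] by simp

subsection \<open>Every monomial is congruent to its normal form\<close>

lemma mag_rel_in_I_Mag: "i < j \<Longrightarrow> j \<le> n \<Longrightarrow> mag_rel n i j \<in> (I_Mag :: (mon \<Rightarrow> 'k::field) set)"
  unfolding I_Mag_def by (rule ideal_gen_generator) blast

lemma mono_diff_Cons_in_I_Mag:
  assumes "(\<lambda>x. mono (Suc n, u) x - mono (Suc n, v) x) \<in> (I_Mag :: (mon \<Rightarrow> 'k::field) set)"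
    and "a \<le> n" "valid_word (Suc n) u" "valid_word (Suc n) v"
  shows "(\<lambda>x. mono (n, a # u) x - mono (n, a # v) x) \<in> (I_Mag :: (mon \<Rightarrow> 'k) set)"
proof -
  have "tmult (\<lambda>x. mono (Suc n, u) x - mono (Suc n, v) x) (mono (n, [a])) \<in> (I_Mag :: (mon \<Rightarrow> 'k) set)"
    using assms unfolding I_Mag_def by (intro ideal_gen_tmult_left Tpd_mono) auto
  then show ?thesis by (simp add: tmult_diff_left tmult_mono_mono)
qed

lemma mono_diff_shift_insert_in_I_Mag:
  "valid_word n (a # s)
    \<Longrightarrow> (\<lambda>x. mono (n, a # s) x - mono (n, shift_insert a s) x) \<in> (I_Mag :: (mon \<Rightarrow> 'k::field) set)"
proof (induction s arbitrary: a n)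
  case (Cons b t)
  show ?case
  proof (cases "a \<le> b")
    case False
    have "tmult (mono (Suc (Suc n), t)) (mag_rel n b a) \<in> (I_Mag :: (mon \<Rightarrow> 'k) set)"
      using False Cons.prems mag_rel_in_I_Mag[of b a n] unfolding I_Mag_def
      by (intro ideal_gen_tmult_right Tpd_mono) auto
    then have swap: "(\<lambda>x. mono (n, a # b # t) x - mono (n, b # Suc a # t) x) \<in> (I_Mag :: (mon \<Rightarrow> 'k) set)"
      by (simp add: mag_rel_def tmult_diff_right tmult_mono_mono)
    have "(\<lambda>x. mono (n, b # Suc a # t) x - mono (n, b # shift_insert (Suc a) t) x) \<in> (I_Mag :: (mon \<Rightarrow> 'k) set)"
      using Cons.prems Cons.IH[of "Suc n" "Suc a"] False
      by (intro mono_diff_Cons_in_I_Mag) (auto intro: valid_word_shift_insert)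
    then show ?thesis
      using False swap unfolding I_Mag_def shift_insert.simps if_not_P[OF False]
      by (blast intro: ideal_gen_diff_trans)
  qed (simp add: I_Mag_def ideal_gen_zero)
qed (simp add: I_Mag_def ideal_gen_zero)

lemma mono_diff_normal_word_in_I_Mag:
  "valid_word n w
    \<Longrightarrow> (\<lambda>x. mono (n, w) x - mono (n, normal_word w) x) \<in> (I_Mag :: (mon \<Rightarrow> 'k::field) set)"
proof (induction w arbitrary: n)
  case (Cons a w)
  have "(\<lambda>x. mono (n, a # w) x - mono (n, a # normal_word w) x) \<in> (I_Mag :: (mon \<Rightarrow> 'k) set)"
    using Cons by (intro mono_diff_Cons_in_I_Mag) (auto intro: valid_word_normal_word)
  moreover have "(\<lambda>x. mono (n, a # normal_word w) x - mono (n, shift_insert a (normal_word w)) x)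
      \<in> (I_Mag :: (mon \<Rightarrow> 'k) set)"
    using Cons.prems by (intro mono_diff_shift_insert_in_I_Mag) (auto intro: valid_word_normal_word)
  ultimately show ?case
    unfolding I_Mag_def normal_word.simps by (rule ideal_gen_diff_trans)
qed (simp add: I_Mag_def ideal_gen_zero)

subsection \<open>Reduction to normal forms\<close>

definition reduce :: "(mon \<Rightarrow> 'k::field) \<Rightarrow> mon \<Rightarrow> 'k" where
  "reduce f y = (\<Sum>w\<in>valid_words (fst y) (length (snd y)). if normal_word w = snd y then f (fst y, w) else 0)"

lemma reduce_apply:
  "reduce f (n, s) = (\<Sum>w\<in>valid_words n (length s). if normal_word w = s then f (n, w) else 0)"
  unfolding reduce_def by (simp only: fst_conv snd_conv)

lemma reduce_add: "reduce (\<lambda>x. f x + g x) y = reduce f y + reduce g y"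
  unfolding reduce_def sum.distrib[symmetric] by (rule sum.cong) auto

lemma reduce_diff: "reduce (\<lambda>x. f x - g x) y = reduce f y - reduce g y"
  unfolding reduce_def sum_subtractf[symmetric] by (rule sum.cong) auto

lemma reduce_smult: "reduce (\<lambda>x. c * f x) y = c * reduce f y"
  unfolding reduce_def sum_distrib_left by (rule sum.cong) auto

lemma reduce_zero: "reduce (\<lambda>_. 0) y = 0"
  by (simp add: reduce_def)

lemma reduce_mono:
  "reduce (mono (n, w)) (m, s) = (if m = n \<and> valid_word n w \<and> normal_word w = s then 1 else 0)"
proof -
  have "reduce (mono (n, w)) (m, s) = (\<Sum>w'\<in>valid_words m (length s).
      if w' = w then (if m = n \<and> normal_word w = s then 1 else 0) else 0)"
    unfolding reduce_apply by (rule sum.cong) (auto simp: mono_def)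
  also have "\<dots> = (if m = n \<and> valid_word n w \<and> normal_word w = s then 1 else 0)"
    by (simp add: sum.delta[OF finite_valid_words]) (auto simp: valid_words_def)
  finally show ?thesis .
qed

lemma reduce_mag_rel: "i < j \<Longrightarrow> j \<le> n \<Longrightarrow> reduce (mag_rel n i j) y = 0"
  by (cases y) (simp add: mag_rel_def reduce_diff reduce_mono)

lemma sum_through_normal_word_eq_0:
  assumes "\<And>t. length t = L \<Longrightarrow> reduce f (m, t) = 0"
  shows "(\<Sum>w\<in>valid_words m L. f (m, w) * h (normal_word w)) = 0"
proof -
  have "(\<Sum>w\<in>valid_words m L. f (m, w) * h (normal_word w))
      = (\<Sum>t\<in>normal_word ` valid_words m L. \<Sum>w\<in>{w\<in>valid_words m L. normal_word w = t}. f (m, w) * h (normal_word w))"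
    by (rule sum.image_gen[OF finite_valid_words])
  also have "\<dots> = (\<Sum>t\<in>normal_word ` valid_words m L. h t * reduce f (m, t))"
  proof (rule sum.cong[OF refl])
    fix t assume "t \<in> normal_word ` valid_words m L"
    then have "length t = L" by (auto simp: valid_words_def)
    then have "reduce f (m, t) = (\<Sum>w\<in>{w\<in>valid_words m L. normal_word w = t}. f (m, w))"
      unfolding reduce_apply by (simp add: sum.inter_filter[OF finite_valid_words])
    then show "(\<Sum>w\<in>{w\<in>valid_words m L. normal_word w = t}. f (m, w) * h (normal_word w)) = h t * reduce f (m, t)"
      by (simp add: sum_distrib_left mult.commute)
  qed
  also have "\<dots> = 0" using assms by (auto intro!: sum.neutral simp: valid_words_def)
  finally show ?thesis .
qed

lemma reduce_tmult:
  "reduce (tmult f g) (n, s) = (\<Sum>k\<le>length s. \<Sum>u\<in>valid_words n k. \<Sum>v\<in>valid_words (n + k) (length s - k).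
      if normal_word (u @ v) = s then g (n, u) * f (n + k, v) else 0)"
proof -
  define L where "L = length s"
  let ?term = "\<lambda>k w. if normal_word w = s then g (n, take k w) * f (n + k, drop k w) else 0"
  have "reduce (tmult f g) (n, s) = (\<Sum>w\<in>valid_words n L. \<Sum>k\<le>L. ?term k w)"
    unfolding reduce_apply L_def[symmetric]
    by (rule sum.cong[OF refl]) (simp add: tmult_apply valid_words_def)
  also have "\<dots> = (\<Sum>k\<le>L. \<Sum>w\<in>valid_words n L. ?term k w)"
    by (rule sum.swap)
  also have "\<dots> = (\<Sum>k\<le>L. \<Sum>u\<in>valid_words n k. \<Sum>v\<in>valid_words (n + k) (L - k).
      if normal_word (u @ v) = s then g (n, u) * f (n + k, v) else 0)"
  proof (rule sum.cong[OF refl])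
    fix k assume "k \<in> {..L}"
    then have "(\<Sum>w\<in>valid_words n L. ?term k w)
        = (\<Sum>p\<in>valid_words n k \<times> valid_words (n + k) (L - k). ?term k ((\<lambda>(u, v). u @ v) p))"
      by (intro sum.reindex_bij_betw[symmetric] valid_words_append_bij) simp
    also have "\<dots> = (\<Sum>(u, v)\<in>valid_words n k \<times> valid_words (n + k) (L - k).
        if normal_word (u @ v) = s then g (n, u) * f (n + k, v) else 0)"
      by (rule sum.cong) (auto simp: valid_words_def)
    finally show "(\<Sum>w\<in>valid_words n L. ?term k w) = (\<Sum>u\<in>valid_words n k. \<Sum>v\<in>valid_words (n + k) (L - k).
        if normal_word (u @ v) = s then g (n, u) * f (n + k, v) else 0)"
      by (simp add: sum.cartesian_product)
  qed
  finally show ?thesis unfolding L_def .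
qed

lemma reduce_tmult_left_eq_0:
  assumes "\<And>y. reduce f y = 0"
  shows "reduce (tmult f g) y = 0"
proof -
  obtain n s where y: "y = (n, s)" by (cases y)
  have "(\<Sum>v\<in>valid_words (n + k) (length s - k).
      if normal_word (u @ v) = s then g (n, u) * f (n + k, v) else 0) = 0" for k u
  proof -
    have "(\<Sum>v\<in>valid_words (n + k) (length s - k). if normal_word (u @ v) = s then g (n, u) * f (n + k, v) else 0)
       = (\<Sum>v\<in>valid_words (n + k) (length s - k).
           f (n + k, v) * (\<lambda>t. if normal_word (u @ t) = s then g (n, u) else 0) (normal_word v))"
      by (intro sum.cong refl) (simp add: normal_word_append_normal_right[of u, symmetric])
    also have "\<dots> = 0" by (rule sum_through_normal_word_eq_0) (use assms in auto)
    finally show ?thesis .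
  qed
  then show ?thesis unfolding y reduce_tmult by simp
qed

lemma reduce_tmult_right_eq_0:
  assumes "\<And>y. reduce f y = 0"
  shows "reduce (tmult g f) y = 0"
proof -
  obtain n s where y: "y = (n, s)" by (cases y)
  have inner: "(\<Sum>u\<in>valid_words n k. if normal_word (u @ v) = s then f (n, u) * g (n + k, v) else 0) = 0" for k v
  proof -
    have "(\<Sum>u\<in>valid_words n k. if normal_word (u @ v) = s then f (n, u) * g (n + k, v) else 0)
       = (\<Sum>u\<in>valid_words n k. f (n, u) * (\<lambda>t. if normal_word (t @ v) = s then g (n + k, v) else 0) (normal_word u))"
      by (intro sum.cong refl) (simp add: normal_word_append_normal_left[of _ v, symmetric])
    also have "\<dots> = 0" by (rule sum_through_normal_word_eq_0) (use assms in auto)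
    finally show ?thesis .
  qed
  have "(\<Sum>u\<in>valid_words n k. \<Sum>v\<in>valid_words (n + k) (length s - k).
      if normal_word (u @ v) = s then f (n, u) * g (n + k, v) else 0) = 0" for k
    by (subst sum.swap) (simp add: inner)
  then show ?thesis unfolding y reduce_tmult by simp
qed

lemma reduce_I_Mag_eq_0:
  assumes "g \<in> (I_Mag :: (mon \<Rightarrow> 'k::field) set)"
  shows "reduce g y = 0"
proof -
  let ?K = "{f :: mon \<Rightarrow> 'k. f \<in> Tpd \<and> (\<forall>y. reduce f y = 0)}"
  have "I_Mag \<subseteq> ?K"
    unfolding I_Mag_def
  proof (rule ideal_gen_least)
    show "{mag_rel n i j | n i j. i < j \<and> j \<le> n} \<subseteq> ?K"
      by (auto simp: Tpd_mag_rel reduce_mag_rel)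
  next
    fix f g :: "mon \<Rightarrow> 'k" assume f: "f \<in> ?K" and g: "g \<in> Tpd"
    then have "\<And>y. reduce f y = 0" by blast
    then show "tmult f g \<in> ?K \<and> tmult g f \<in> ?K"
      using f g by (simp add: Tpd_tmult reduce_tmult_left_eq_0 reduce_tmult_right_eq_0)
  qed (auto simp: Tpd_zero Tpd_add Tpd_smult reduce_zero reduce_add reduce_smult)
  with assms show ?thesis by blast
qed

lemma reduce_nonzero:
  assumes "reduce f (n, s) \<noteq> 0"
  obtains w where "valid_word n w" "normal_word w = s" "f (n, w) \<noteq> 0"
proof -
  from assms obtain w where "w \<in> valid_words n (length s)"
    "(if normal_word w = s then f (n, w) else 0) \<noteq> 0"
    unfolding reduce_apply by (rule sum.not_neutral_contains_not_neutral)
  then show thesis using that by (auto simp: valid_words_def split: if_splits)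
qed

lemma reduce_in_Bmon: "reduce f x \<noteq> 0 \<Longrightarrow> x \<in> Bmon"
  by (cases x) (auto elim!: reduce_nonzero
      simp: Bmon_def valid_mon_iff_valid_word valid_word_normal_word sorted_normal_word)

lemma Tpd_reduce: "f \<in> Tpd \<Longrightarrow> reduce f \<in> Tpd"
proof (rule TpdI)
  assume f: "f \<in> Tpd"
  let ?nf = "\<lambda>(n, w). (n, normal_word w)"
  show "finite {x. reduce f x \<noteq> 0}"
  proof (rule finite_subset)
    show "{x. reduce f x \<noteq> 0} \<subseteq> ?nf ` {x. f x \<noteq> 0}"
      by (clarify, erule reduce_nonzero) force
    show "finite (?nf ` {x. f x \<noteq> 0})" using Tpd_finite_support[OF f] by simp
  qed
  fix n s assume "reduce f (n, s) \<noteq> 0"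
  then show "valid_word n s" by (auto elim!: reduce_nonzero intro: valid_word_normal_word)
qed

lemma reduce_eq_sum_support:
  assumes f: "f \<in> Tpd"
  shows "reduce f y = (\<Sum>z\<in>{x. f x \<noteq> 0}. f z * mono (fst z, normal_word (snd z)) y)"
proof -
  obtain n s where y: "y = (n, s)" by (cases y)
  define T where "T = {x. f x \<noteq> 0}"
  define A where "A = Pair n ` valid_words n (length s)"
  define h where "h z = (if fst z = n \<and> normal_word (snd z) = s then f z else 0)" for z
  have "finite T" using Tpd_finite_support[OF f] by (simp add: T_def)
  have "finite A" by (simp add: A_def finite_valid_words)
  have "reduce f y = sum h A"
    unfolding y reduce_apply h_def A_def by (subst sum.reindex) (auto simp: inj_on_def)
  also have "\<dots> = sum h (A \<inter> T)"
    using \<open>finite A\<close> by (intro sum.mono_neutral_right) (auto simp: h_def T_def)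
  also have "\<dots> = sum h T"
  proof (rule sum.mono_neutral_left[OF \<open>finite T\<close>])
    show "\<forall>z\<in>T - A \<inter> T. h z = 0"
      using TpdD[OF f] by (auto simp: h_def T_def A_def valid_words_def image_iff)
  qed blast
  also have "\<dots> = (\<Sum>z\<in>T. f z * mono (fst z, normal_word (snd z)) y)"
    by (rule sum.cong[OF refl]) (auto simp: h_def mono_def y)
  finally show ?thesis by (simp add: T_def)
qed

lemma diff_reduce_in_I_Mag:
  assumes f: "f \<in> Tpd"
  shows "(\<lambda>x. f x - reduce f x) \<in> (I_Mag :: (mon \<Rightarrow> 'k::field) set)"
proof -
  define T where "T = {x. f x \<noteq> 0}"
  have "finite T" using Tpd_finite_support[OF f] by (simp add: T_def)
  have expand: "(\<Sum>z\<in>T. f z * mono z y) = f y" for y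
  proof -
    have "(\<Sum>z\<in>T. f z * mono z y) = (\<Sum>z\<in>T. if y = z then f y else 0)"
      by (rule sum.cong) (auto simp: mono_def)
    then show ?thesis using \<open>finite T\<close> by (simp add: T_def)
  qed
  have "(\<lambda>x. f x - reduce f x) = (\<lambda>x. \<Sum>z\<in>T. f z * (mono z x - mono (fst z, normal_word (snd z)) x))"
    by (simp add: reduce_eq_sum_support[OF f, folded T_def] right_diff_distrib sum_subtractf expand)
  also have "\<dots> \<in> I_Mag"
    unfolding I_Mag_def
  proof (rule ideal_gen_sum[OF \<open>finite T\<close>])
    fix z assume "z \<in> T"
    then have "valid_word (fst z) (snd z)" using TpdD[OF f, of "fst z" "snd z"] by (simp add: T_def)
    from mono_diff_normal_word_in_I_Mag[OF this]
    show "(\<lambda>x. f z * (mono z x - mono (fst z, normal_word (snd z)) x))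
        \<in> ideal_gen {mag_rel n i j |n i j. i < j \<and> j \<le> n}"
      unfolding I_Mag_def using ideal_gen_smult[of _ _ "f z"] by simp
  qed
  finally show ?thesis .
qed

lemma reduce_eq_self:
  assumes g: "g \<in> Tpd" and supp: "\<And>x. g x \<noteq> 0 \<Longrightarrow> x \<in> Bmon"
  shows "reduce g = g"
proof (rule ext, clarify)
  fix n s
  have "reduce g (n, s) = (\<Sum>w\<in>valid_words n (length s). if w = s then g (n, s) else 0)"
    unfolding reduce_apply
  proof (rule sum.cong[OF refl])
    fix w
    show "(if normal_word w = s then g (n, w) else 0) = (if w = s then g (n, s) else 0)"
    proof (cases "g (n, w) = 0")
      case False
      then have "sorted w" using supp[of "(n, w)"] by (simp add: Bmon_def)
      then show ?thesis by (simp add: normal_word_sorted)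
    next
      case True
      then show ?thesis
        using supp[of "(n, s)"] by (auto simp: Bmon_def normal_word_sorted)
    qed
  qed
  also have "\<dots> = g (n, s)"
    using TpdD[OF g, of n s] by (subst sum.delta[OF finite_valid_words]) (auto simp: valid_words_def)
  finally show "reduce g (n, s) = g (n, s)" .
qed

theorem proposition1p2:
  shows "(\<forall>f\<in>(Tpd :: (mon \<Rightarrow> 'k::field) set).
            \<exists>g\<in>Tpd. (\<forall>x. g x \<noteq> 0 \<longrightarrow> x \<in> Bmon) \<and> (\<lambda>x. f x - g x) \<in> I_Mag)
       \<and> (\<forall>g\<in>(Tpd :: (mon \<Rightarrow> 'k::field) set).
            (\<forall>x. g x \<noteq> 0 \<longrightarrow> x \<in> Bmon) \<and> g \<in> I_Mag \<longrightarrow> g = (\<lambda>_. 0))"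
proof (intro conjI ballI impI)
  fix f :: "mon \<Rightarrow> 'k" assume "f \<in> Tpd"
  then show "\<exists>g\<in>Tpd. (\<forall>x. g x \<noteq> 0 \<longrightarrow> x \<in> Bmon) \<and> (\<lambda>x. f x - g x) \<in> I_Mag"
    using Tpd_reduce reduce_in_Bmon diff_reduce_in_I_Mag by blast
next
  fix g :: "mon \<Rightarrow> 'k"
  assume g: "g \<in> Tpd" and "(\<forall>x. g x \<noteq> 0 \<longrightarrow> x \<in> Bmon) \<and> g \<in> I_Mag"
  then have supp: "\<And>x. g x \<noteq> 0 \<Longrightarrow> x \<in> Bmon" and "g \<in> I_Mag" by auto
  have "g = reduce g" using reduce_eq_self[OF g supp] by simp
  also have "\<dots> = (\<lambda>_. 0)" using reduce_I_Mag_eq_0[OF \<open>g \<in> I_Mag\<close>] by auto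
  finally show "g = (\<lambda>_. 0)" .
qed

end
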